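(* Let $(R,\mathfrak m)$ be a one-dimensional Cohen–Macaulay local ring with infinite residue field admitting a canonical module $\omega_R$ with $R\subseteq\omega_R\subseteq\overline R$. Let $I$ be a fractional ideal of $R$ and let $z$ be a reduction of $\omega_R:I$. The following are equivalent: (1) $I$ is almost canonical; (2) $\omega_R:\mathfrak m=zI:\mathfrak m$; (3) $\mathfrak m\,\omega_R\subseteq zI$.
   Context: $Q(R)$ is the total ring of fractions and $\overline R$ the integral closure of $R$ in $Q(R)$; fractional ideals are finitely generated $R$-submodules of $Q(R)$ containing a non-zero-divisor, and $I:J=\{r\in Q(R)\mid rJ\subseteq I\}$. A reduction of $\omega_R:I$ is an element $z=x/y$ where $y\in R$ is regular with $y(\omega_R:I)\subseteq R$ and $(x)$ is a minimal reduction of the ideal $y(\omega_R:I)$. $I$ is almost canonical if $\omega_R:(\mathfrak m:\mathfrak m)\subseteq zI$ (this does not depend on the choices of $\omega_R$, $y$, $x$). *)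

theory Defs
  imports Main
begin

text \<open>Ambient type 'q plays the role of the total ring of fractions Q(R); R is a subset.\<close>

definition subring :: "'q::comm_ring_1 set \<Rightarrow> bool" where
  "subring R \<longleftrightarrow> 0 \<in> R \<and> 1 \<in> R \<and> (\<forall>a\<in>R. \<forall>b\<in>R. a + b \<in> R \<and> a - b \<in> R \<and> a * b \<in> R)"

definition rmodule :: "'q::comm_ring_1 set \<Rightarrow> 'q set \<Rightarrow> bool" where
  "rmodule R M \<longleftrightarrow> 0 \<in> M \<and> (\<forall>a\<in>M. \<forall>b\<in>M. a + b \<in> M) \<and> (\<forall>r\<in>R. \<forall>a\<in>M. r * a \<in> M)"

definition gen :: "'q::comm_ring_1 set \<Rightarrow> 'q set \<Rightarrow> 'q set" where
  "gen R G = {(\<Sum>g\<in>G. c g * g) | c. \<forall>g\<in>G. c g \<in> R}"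

definition fin_gen :: "'q::comm_ring_1 set \<Rightarrow> 'q set \<Rightarrow> bool" where
  "fin_gen R M \<longleftrightarrow> (\<exists>G. finite G \<and> G \<subseteq> M \<and> M = gen R G)"

definition r_ideal :: "'q::comm_ring_1 set \<Rightarrow> 'q set \<Rightarrow> bool" where
  "r_ideal R J \<longleftrightarrow> J \<subseteq> R \<and> rmodule R J"

definition prime_ideal :: "'q::comm_ring_1 set \<Rightarrow> 'q set \<Rightarrow> bool" where
  "prime_ideal R P \<longleftrightarrow> r_ideal R P \<and> P \<noteq> R \<and> (\<forall>a\<in>R. \<forall>b\<in>R. a * b \<in> P \<longrightarrow> a \<in> P \<or> b \<in> P)"

definition noetherian :: "'q::comm_ring_1 set \<Rightarrow> bool" where
  "noetherian R \<longleftrightarrow> (\<forall>J. r_ideal R J \<longrightarrow> fin_gen R J)"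

definition krull_dim_one :: "'q::comm_ring_1 set \<Rightarrow> bool" where
  "krull_dim_one R \<longleftrightarrow> (\<exists>P Q. prime_ideal R P \<and> prime_ideal R Q \<and> P \<subset> Q) \<and>
     \<not> (\<exists>P Q S. prime_ideal R P \<and> prime_ideal R Q \<and> prime_ideal R S \<and> P \<subset> Q \<and> Q \<subset> S)"

definition local_ring :: "'q::comm_ring_1 set \<Rightarrow> 'q set \<Rightarrow> bool" where
  "local_ring R m \<longleftrightarrow> m = {r \<in> R. \<not> (\<exists>u\<in>R. r * u = 1)} \<and> r_ideal R m"

definition regular_in :: "'q::comm_ring_1 set \<Rightarrow> 'q \<Rightarrow> bool" where
  "regular_in A s \<longleftrightarrow> s \<in> A \<and> (\<forall>r\<in>A. s * r = 0 \<longrightarrow> r = 0)"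

definition total_ring_of_fractions :: "'q::comm_ring_1 set \<Rightarrow> bool" where
  "total_ring_of_fractions R \<longleftrightarrow> subring R \<and>
     (\<forall>s. regular_in R s \<longrightarrow> (\<exists>t. s * t = 1)) \<and>
     (\<forall>q. \<exists>a\<in>R. \<exists>s. regular_in R s \<and> q * s = a)"

text \<open>One-dimensional CM: dimension one and depth >= 1, i.e. m contains an R-regular element\<close>
definition cm_dim_one :: "'q::comm_ring_1 set \<Rightarrow> 'q set \<Rightarrow> bool" where
  "cm_dim_one R m \<longleftrightarrow> krull_dim_one R \<and> (\<exists>x\<in>m. regular_in R x)"

definition infinite_residue_field :: "'q::comm_ring_1 set \<Rightarrow> 'q set \<Rightarrow> bool" where
  "infinite_residue_field R m \<longleftrightarrow> infinite ((\<lambda>r. {s \<in> R. r - s \<in> m}) ` R)"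

definition integral_closure :: "'q::comm_ring_1 set \<Rightarrow> 'q set" where
  "integral_closure R = {q. \<exists>n a. (\<forall>i<n. a i \<in> R) \<and> q ^ n + (\<Sum>i<n. a i * q ^ i) = 0}"

definition frac_ideal :: "'q::comm_ring_1 set \<Rightarrow> 'q set \<Rightarrow> bool" where
  "frac_ideal R I \<longleftrightarrow> rmodule R I \<and> fin_gen R I \<and> (\<exists>x\<in>I. regular_in UNIV x)"

definition colon :: "'q::comm_ring_1 set \<Rightarrow> 'q set \<Rightarrow> 'q set" where
  "colon I J = {r. \<forall>j\<in>J. r * j \<in> I}"

definition iprod :: "'q::comm_ring_1 set \<Rightarrow> 'q set \<Rightarrow> 'q set" where
  "iprod I J = {(\<Sum>i<(n::nat). a i * b i) | n a b. \<forall>i<n. a i \<in> I \<and> b i \<in> J}"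

definition smul :: "'q::comm_ring_1 \<Rightarrow> 'q set \<Rightarrow> 'q set" where
  "smul z I = (\<lambda>x. z * x) ` I"

fun ipow :: "'q::comm_ring_1 set \<Rightarrow> 'q set \<Rightarrow> nat \<Rightarrow> 'q set" where
  "ipow R J 0 = R"
| "ipow R J (Suc n) = iprod J (ipow R J n)"

definition is_reduction :: "'q::comm_ring_1 set \<Rightarrow> 'q set \<Rightarrow> 'q set \<Rightarrow> bool" where
  "is_reduction R K J \<longleftrightarrow> r_ideal R K \<and> r_ideal R J \<and> K \<subseteq> J \<and>
     (\<exists>n. ipow R J (Suc n) = iprod K (ipow R J n))"

definition is_minimal_reduction :: "'q::comm_ring_1 set \<Rightarrow> 'q set \<Rightarrow> 'q set \<Rightarrow> bool" where
  "is_minimal_reduction R K J \<longleftrightarrow> is_reduction R K J \<and>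
     (\<forall>K'. K' \<subseteq> K \<longrightarrow> is_reduction R K' J \<longrightarrow> K' = K)"

text \<open>Canonical fractional ideal (one-dimensional CM case): duality K:(K:I) = I for all fractional I\<close>
definition canonical_ideal :: "'q::comm_ring_1 set \<Rightarrow> 'q set \<Rightarrow> bool" where
  "canonical_ideal R W \<longleftrightarrow> frac_ideal R W \<and>
     (\<forall>I. frac_ideal R I \<longrightarrow> colon W (colon W I) = I)"

text \<open>z = x/y is a reduction of W:I\<close>
definition reduction_of_colon :: "'q::comm_ring_1 set \<Rightarrow> 'q set \<Rightarrow> 'q set \<Rightarrow> 'q \<Rightarrow> bool" where
  "reduction_of_colon R W I z \<longleftrightarrow> (\<exists>x y. regular_in R y \<and> smul y (colon W I) \<subseteq> R \<and>
     is_minimal_reduction R (smul x R) (smul y (colon W I)) \<and> z * y = x)"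

definition almost_canonical :: "'q::comm_ring_1 set \<Rightarrow> 'q set \<Rightarrow> 'q set \<Rightarrow> 'q set \<Rightarrow> 'q \<Rightarrow> bool" where
  "almost_canonical R m W I z \<longleftrightarrow> colon W (colon m m) \<subseteq> smul z I"

end

theory Submission
  imports Defs
begin

(* Each of the three conditions is equivalent to W:zI \<subseteq> m:m, i.e. to m(W:m) \<subseteq> zI.
   The ideal W:I contains a unit of Q(R), hence so does A = y(W:I), and a power of that unit
   lies in A^(n+1) = xA^n; so x = zy and z are units and L = zI is a fractional ideal inside W.
   Duality W:(W:X) = X for X = m and X = L then gives the equivalences with (1) and (2).
   For (3), if mW \<subseteq> L and h \<in> W:L, then hm \<subseteq> W:W = R.  If some ha were outside m,
   h would have an inverse b \<in> m.  But hx \<in> A, so h^k x^n \<in> A^n \<subseteq> R for all k; the ascending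
   chain x^n h^k R of ideals stabilises, which forces h \<in> R and makes b a unit. *)

lemma rmodule_sum:
  assumes "rmodule R M" "finite G" "\<And>g. g \<in> G \<Longrightarrow> f g \<in> M"
  shows "sum f G \<in> M"
  using assms(2,3) by (induction G rule: finite_induct) (use assms(1) in \<open>auto simp: rmodule_def\<close>)

lemma gen_subset:
  assumes "rmodule R M" "finite G" "G \<subseteq> M"
  shows "gen R G \<subseteq> M"
proof
  fix v assume "v \<in> gen R G"
  then obtain c where v: "v = (\<Sum>g\<in>G. c g * g)" and c: "\<forall>g\<in>G. c g \<in> R"
    by (auto simp: gen_def)
  show "v \<in> M"
    unfolding v by (rule rmodule_sum[OF assms(1,2)]) (use assms(1,3) c in \<open>auto simp: rmodule_def\<close>)
qed

lemma subring_rmodule: "subring R \<Longrightarrow> rmodule R R"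
  by (simp add: subring_def rmodule_def)

lemma colon_rmodule: "rmodule R W \<Longrightarrow> rmodule R (colon W J)"
  by (simp add: rmodule_def colon_def distrib_right mult.assoc)

lemma smul_rmodule: "rmodule R M \<Longrightarrow> rmodule R (smul c M)"
  unfolding rmodule_def smul_def
  by (auto simp: distrib_left[symmetric] intro!: image_eqI[of 0 _ 0])
    (metis image_eqI mult.left_commute)

lemma subring_smul_r_ideal:
  assumes "subring R" "c \<in> R"
  shows "r_ideal R (smul c R)"
  using assms smul_rmodule[OF subring_rmodule] by (auto simp: r_ideal_def smul_def subring_def)

lemma colonI: "(\<And>j. j \<in> J \<Longrightarrow> r * j \<in> I) \<Longrightarrow> r \<in> colon I J"
  by (simp add: colon_def)

lemma colonD: "r \<in> colon I J \<Longrightarrow> j \<in> J \<Longrightarrow> r * j \<in> I"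
  by (simp add: colon_def)

lemma colon_antimono: "J \<subseteq> K \<Longrightarrow> colon W K \<subseteq> colon W J"
  by (auto simp: colon_def)

lemma colon_mono: "W \<subseteq> W' \<Longrightarrow> colon W J \<subseteq> colon W' J"
  by (auto simp: colon_def)

lemma invertible_regular_in:
  fixes q :: "'q::comm_ring_1"
  assumes "q * t = 1" shows "regular_in UNIV q"
  unfolding regular_in_def
proof (intro conjI ballI impI)
  fix r assume "q * r = 0"
  then have "t * q * r = 0" by (simp add: mult.assoc mult.left_commute)
  then show "r = 0" using assms by (simp add: mult.commute)
qed simp

lemma regular_in_mult:
  assumes "subring R" "regular_in R s" "regular_in R t"
  shows "regular_in R (s * t)"
  unfolding regular_in_def
proof (intro conjI ballI impI)
  have sR: "s \<in> R" "t \<in> R" using assms(2,3) by (simp_all add: regular_in_def)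
  then show "s * t \<in> R" using assms(1) by (simp add: subring_def)
  fix r assume r: "r \<in> R" "s * t * r = 0"
  then have "t * r \<in> R" "s * (t * r) = 0" using sR assms(1) by (simp_all add: subring_def mult.assoc)
  then have "t * r = 0" using assms(2) unfolding regular_in_def by blast
  then show "r = 0" using assms(3) r(1) unfolding regular_in_def by blast
qed

lemma regular_in_UNIV_invertible:
  fixes R :: "'q::comm_ring_1 set" and q :: 'q
  assumes "total_ring_of_fractions R" "regular_in UNIV q"
  shows "\<exists>t. q * t = 1"
proof -
  from assms(1) obtain a s where a: "a \<in> R" "regular_in R s" "q * s = a"
    unfolding total_ring_of_fractions_def by blast
  have "regular_in R a"
    unfolding regular_in_def
  proof (intro conjI ballI impI)
    fix r assume r: "r \<in> R" "a * r = 0"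
    then have "q * (s * r) = 0" using a r by (metis mult.assoc)
    then have "s * r = 0" using assms(2) unfolding regular_in_def by blast
    then show "r = 0" using a(2) r(1) unfolding regular_in_def by blast
  qed fact
  then obtain t where "a * t = 1" using assms(1) by (auto simp: total_ring_of_fractions_def)
  then have "q * (s * t) = 1" using a by (metis mult.assoc)
  then show ?thesis by blast
qed

lemma finite_common_denominator:
  fixes R :: "'q::comm_ring_1 set"
  assumes "total_ring_of_fractions R" "finite G"
  shows "\<exists>s. regular_in R s \<and> (\<forall>g\<in>G. s * g \<in> R)"
  using assms(2)
proof (induction G rule: finite_induct)
  case empty
  have "regular_in R 1"
    using assms(1) by (simp add: regular_in_def total_ring_of_fractions_def subring_def)
  then show ?case by blast
next
  case (insert g G)
  have sR: "subring R" using assms(1) by (simp add: total_ring_of_fractions_def)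
  obtain s where s: "regular_in R s" "\<forall>g\<in>G. s * g \<in> R" using insert.IH by blast
  obtain a t where t: "a \<in> R" "regular_in R t" "g * t = a"
    using assms(1) unfolding total_ring_of_fractions_def by blast
  have "s \<in> R" "t \<in> R" using s(1) t(2) by (simp_all add: regular_in_def)
  then have "\<forall>h\<in>insert g G. s * t * h \<in> R"
    using s(2) t(1,3) sR unfolding subring_def by (metis insert_iff mult.commute mult.left_commute)
  then show ?case using regular_in_mult[OF sR s(1) t(2)] by blast
qed

lemma fin_gen_common_denominator:
  fixes R :: "'q::comm_ring_1 set"
  assumes "total_ring_of_fractions R" "fin_gen R I"
  shows "\<exists>s. regular_in R s \<and> (\<forall>i\<in>I. s * i \<in> R)"
proof -
  obtain G where G: "finite G" "I = gen R G" using assms(2) by (auto simp: fin_gen_def)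
  obtain s where s: "regular_in R s" "\<forall>g\<in>G. s * g \<in> R"
    using finite_common_denominator[OF assms(1) G(1)] by blast
  have "rmodule R (colon R {s})"
    using assms(1) by (simp add: colon_rmodule subring_rmodule total_ring_of_fractions_def)
  then have "I \<subseteq> colon R {s}"
    unfolding G(2) by (rule gen_subset[OF _ G(1)]) (use s(2) in \<open>auto simp: colon_def mult.commute\<close>)
  then show ?thesis using s(1) by (intro exI[of _ s]) (auto simp: colon_def mult.commute)
qed

lemma subring_frac_ideal:
  fixes R :: "'q::comm_ring_1 set"
  assumes "subring R" shows "frac_ideal R R"
proof -
  have "R = gen R {1}" by (auto simp: gen_def)
  then have "fin_gen R R" using assms by (auto simp: fin_gen_def subring_def)
  moreover have "regular_in UNIV (1::'q)" by (rule invertible_regular_in[of 1 1]) simp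
  ultimately show ?thesis
    using assms subring_rmodule by (auto simp: frac_ideal_def subring_def)
qed

lemma gen_smul:
  assumes "inj_on ((*) z) G"
  shows "gen R (smul z G) = smul z (gen R G)"
proof -
  have sum_smul: "(\<Sum>q\<in>smul z G. c q * q) = z * (\<Sum>g\<in>G. c (z * g) * g)" for c
    unfolding smul_def sum.reindex[OF assms] by (simp add: sum_distrib_left mult.left_commute)
  show ?thesis
  proof (intro set_eqI iffI)
    fix v assume "v \<in> gen R (smul z G)"
    then obtain c where "v = (\<Sum>q\<in>smul z G. c q * q)" and "\<forall>q\<in>smul z G. c q \<in> R"
      by (auto simp: gen_def)
    then have "v = z * (\<Sum>g\<in>G. c (z * g) * g)" "\<forall>g\<in>G. c (z * g) \<in> R"
      by (simp add: sum_smul, simp add: smul_def)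
    then show "v \<in> smul z (gen R G)"
      unfolding gen_def smul_def by (intro image_eqI[of v _ "\<Sum>g\<in>G. c (z * g) * g"]) auto
  next
    fix v assume "v \<in> smul z (gen R G)"
    then obtain c where v: "v = z * (\<Sum>g\<in>G. c g * g)" and c: "\<forall>g\<in>G. c g \<in> R"
      by (auto simp: gen_def smul_def)
    define c' where "c' q = c (THE g. g \<in> G \<and> q = z * g)" for q
    have "c' (z * g) = c g" if "g \<in> G" for g
      using assms that unfolding c'_def by (auto intro!: arg_cong[of _ _ c] the_equality dest: inj_onD)
    then have "v = (\<Sum>q\<in>smul z G. c' q * q)" "\<forall>q\<in>smul z G. c' q \<in> R"
      using c by (simp add: v sum_smul cong: sum.cong, simp add: smul_def)
    then show "v \<in> gen R (smul z G)" unfolding gen_def by blast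
  qed
qed

lemma frac_ideal_smul_unit:
  assumes "frac_ideal R I" "z * zi = 1"
  shows "frac_ideal R (smul z I)"
proof -
  have inj: "inj_on ((*) z) A" for A
    by (rule inj_onI) (metis assms(2) mult.assoc mult.commute mult_1)
  obtain G where G: "finite G" "G \<subseteq> I" "I = gen R G"
    using assms(1) by (auto simp: frac_ideal_def fin_gen_def)
  then have "fin_gen R (smul z I)"
    unfolding fin_gen_def using gen_smul[OF inj] by (intro exI[of _ "smul z G"]) (auto simp: smul_def)
  moreover obtain i where i: "i \<in> I" "regular_in UNIV i"
    using assms(1) by (auto simp: frac_ideal_def)
  have "regular_in UNIV (z * i)"
    unfolding regular_in_def
  proof (intro conjI ballI impI)
    fix r assume "z * i * r = 0"
    then have "i * (z * r) = 0" by (simp add: algebra_simps)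
    then have "z * r = 0" using i(2) unfolding regular_in_def by blast
    then show "r = 0" using inj by (metis inj_onD mult_zero_right UNIV_I)
  qed simp
  moreover have "z * i \<in> smul z I" using i(1) by (simp add: smul_def)
  ultimately show ?thesis
    using assms(1) smul_rmodule by (auto simp: frac_ideal_def)
qed

lemma canonical_colon_self:
  assumes "canonical_ideal R W" "subring R"
  shows "colon W W = R"
proof -
  have "rmodule R W" using assms(1) by (simp add: canonical_ideal_def frac_ideal_def)
  then have "colon W R = W"
  proof (intro set_eqI iffI)
    fix w assume "w \<in> colon W R"
    then show "w \<in> W" using assms(2) by (auto simp: colon_def subring_def)
  next
    fix w assume "w \<in> W"
    then show "w \<in> colon W R" using \<open>rmodule R W\<close> by (auto simp: colon_def rmodule_def mult.commute)
  qed
  then show ?thesis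
    using assms subring_frac_ideal by (metis canonical_ideal_def)
qed

lemma max_ideal_frac_ideal:
  fixes R :: "'q::comm_ring_1 set"
  assumes "total_ring_of_fractions R" "noetherian R" "local_ring R m" "cm_dim_one R m"
  shows "frac_ideal R m"
proof -
  have "r_ideal R m" using assms(3) unfolding local_ring_def by blast
  then have "rmodule R m" "fin_gen R m" using assms(2) by (simp_all add: r_ideal_def noetherian_def)
  moreover obtain x where x: "x \<in> m" "regular_in R x" using assms(4) by (auto simp: cm_dim_one_def)
  moreover obtain t where "x * t = 1"
    using assms(1) x(2) unfolding total_ring_of_fractions_def by blast
  ultimately show ?thesis using invertible_regular_in unfolding frac_ideal_def by blast
qed

lemma mem_iprod_iff:
  "v \<in> iprod A B \<longleftrightarrow> (\<exists>(n::nat) a b. v = (\<Sum>i<n. a i * b i) \<and> (\<forall>i<n. a i \<in> A \<and> b i \<in> B))"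
  unfolding iprod_def by blast

lemma iprod_mem: "a \<in> A \<Longrightarrow> b \<in> B \<Longrightarrow> a * b \<in> iprod A B"
  unfolding iprod_def by (intro CollectI exI[of _ 1] exI[of _ "\<lambda>_. a"] exI[of _ "\<lambda>_. b"]) simp

lemma iprod_subset:
  assumes "rmodule R L" "\<And>a b. a \<in> A \<Longrightarrow> b \<in> B \<Longrightarrow> a * b \<in> L"
  shows "iprod A B \<subseteq> L"
proof
  fix v assume "v \<in> iprod A B"
  then obtain n a b where v: "v = (\<Sum>i<(n::nat). a i * b i)" "\<forall>i<n. a i \<in> A \<and> b i \<in> B"
    unfolding mem_iprod_iff by blast
  show "v \<in> L"
    unfolding v(1) by (rule rmodule_sum[OF assms(1)]) (use v(2) assms(2) in auto)
qed

lemma iprod_subset_iff: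
  assumes "rmodule R L"
  shows "iprod A B \<subseteq> L \<longleftrightarrow> (\<forall>a\<in>A. \<forall>b\<in>B. a * b \<in> L)"
proof
  show "iprod A B \<subseteq> L \<Longrightarrow> \<forall>a\<in>A. \<forall>b\<in>B. a * b \<in> L" using iprod_mem by blast
  show "\<forall>a\<in>A. \<forall>b\<in>B. a * b \<in> L \<Longrightarrow> iprod A B \<subseteq> L" using iprod_subset[OF assms] by blast
qed

lemma iprod_rmodule:
  assumes "\<forall>r\<in>R. \<forall>a\<in>A. r * a \<in> A"
  shows "rmodule R (iprod A B)"
  unfolding rmodule_def
proof (intro conjI ballI)
  show "0 \<in> iprod A B" unfolding iprod_def by (intro CollectI exI[of _ 0]) simp
next
  fix v1 v2 assume "v1 \<in> iprod A B" "v2 \<in> iprod A B"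
  obtain n1 a1 b1 where v1: "v1 = (\<Sum>i<(n1::nat). a1 i * b1 i)" "\<forall>i<n1. a1 i \<in> A \<and> b1 i \<in> B"
    using \<open>v1 \<in> iprod A B\<close> unfolding mem_iprod_iff by blast
  obtain n2 a2 b2 where v2: "v2 = (\<Sum>i<(n2::nat). a2 i * b2 i)" "\<forall>i<n2. a2 i \<in> A \<and> b2 i \<in> B"
    using \<open>v2 \<in> iprod A B\<close> unfolding mem_iprod_iff by blast
  define a where "a i = (if i < n1 then a1 i else a2 (i - n1))" for i
  define b where "b i = (if i < n1 then b1 i else b2 (i - n1))" for i
  have split: "(\<Sum>i<n1 + n. f i) = (\<Sum>i<n1. f i) + (\<Sum>i<n. f (n1 + i))" for n and f :: "nat \<Rightarrow> 'a"
    by (induction n) (simp_all add: add.assoc)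
  have "v1 + v2 = (\<Sum>i<n1 + n2. a i * b i)"
    unfolding split v1 v2 a_def b_def by simp
  moreover have "\<forall>i<n1 + n2. a i \<in> A \<and> b i \<in> B"
    using v1(2) v2(2) unfolding a_def b_def by auto
  ultimately show "v1 + v2 \<in> iprod A B" unfolding mem_iprod_iff by blast
next
  fix r v assume r: "r \<in> R" and "v \<in> iprod A B"
  then obtain n a b where v: "v = (\<Sum>i<(n::nat). a i * b i)" "\<forall>i<n. a i \<in> A \<and> b i \<in> B"
    unfolding mem_iprod_iff by blast
  then have "r * v = (\<Sum>i<n. (r * a i) * b i)" "\<forall>i<n. r * a i \<in> A \<and> b i \<in> B"
    using r assms by (simp_all add: sum_distrib_left mult.assoc)
  then show "r * v \<in> iprod A B"
    unfolding mem_iprod_iff by (intro exI[of _ n] exI[of _ "\<lambda>i. r * a i"] exI[of _ b]) simp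
qed

lemma iprod_smul_elim:
  assumes "rmodule R B" "v \<in> iprod (smul x R) B"
  obtains b where "b \<in> B" "v = x * b"
proof -
  obtain n a b where v: "v = (\<Sum>i<(n::nat). a i * b i)" "\<forall>i<n. a i \<in> smul x R \<and> b i \<in> B"
    using assms(2) unfolding mem_iprod_iff by blast
  then have "\<forall>i<n. \<exists>r\<in>R. a i = x * r" by (auto simp: smul_def)
  then obtain r where r: "\<forall>i<n. r i \<in> R \<and> a i = x * r i" by metis
  then have "v = x * (\<Sum>i<n. r i * b i)"
    unfolding v(1) by (simp add: sum_distrib_left mult.assoc)
  moreover have "(\<Sum>i<n. r i * b i) \<in> B"
    using r v(2) assms(1) by (intro rmodule_sum[OF assms(1)]) (auto simp: rmodule_def)
  ultimately show thesis using that by blast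
qed

lemma ipow_rmodule:
  assumes "subring R" "r_ideal R A"
  shows "rmodule R (ipow R A n)"
proof (cases n)
  case (Suc k)
  have "\<forall>r\<in>R. \<forall>a\<in>A. r * a \<in> A" using assms(2) by (simp add: r_ideal_def rmodule_def)
  then show ?thesis using Suc by (simp add: iprod_rmodule)
qed (simp add: assms(1) subring_rmodule)

lemma ipow_subset:
  assumes "subring R" "A \<subseteq> R"
  shows "ipow R A n \<subseteq> R"
proof (induction n)
  case (Suc n)
  have "iprod A (ipow R A n) \<subseteq> R"
    using assms Suc by (intro iprod_subset[OF subring_rmodule[OF assms(1)]]) (auto simp: subring_def)
  then show ?case by simp
qed simp

lemma power_mem_ipow: "a \<in> A \<Longrightarrow> 1 \<in> R \<Longrightarrow> a ^ n \<in> ipow R A n"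
  by (induction n) (auto intro: iprod_mem)

lemma reduction_generator_unit:
  assumes "subring R" "r_ideal R A" "ipow R A (Suc n) = iprod (smul x R) (ipow R A n)"
    and "u \<in> A" "u * v = 1"
  shows "\<exists>xi. x * xi = 1"
proof -
  have "1 \<in> R" using assms(1) by (simp add: subring_def)
  then have "u ^ Suc n \<in> iprod (smul x R) (ipow R A n)"
    using power_mem_ipow[OF assms(4)] assms(3) by metis
  then obtain w where "u ^ Suc n = x * w"
    using iprod_smul_elim[OF ipow_rmodule[OF assms(1,2)]] by metis
  then have "x * (w * v ^ Suc n) = u ^ Suc n * v ^ Suc n"
    by (metis mult.assoc)
  also have "\<dots> = (u * v) ^ Suc n"
    by (rule power_mult_distrib[symmetric])
  also have "\<dots> = 1"
    using assms(5) by simp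
  finally have "x * (w * v ^ Suc n) = 1" .
  then show ?thesis by blast
qed

lemma reduction_power_mult_mem:
  assumes "subring R" "r_ideal R A" "ipow R A (Suc n) = iprod (smul x R) (ipow R A n)"
    and "x * xi = 1" "x \<in> A" "h * x \<in> A"
  shows "h ^ k * x ^ n \<in> ipow R A n"
proof (induction k)
  case 0
  show ?case using power_mem_ipow[OF assms(5)] assms(1) by (simp add: subring_def)
next
  case (Suc k)
  have "(h * x) * (h ^ k * x ^ n) \<in> iprod (smul x R) (ipow R A n)"
    using iprod_mem[OF assms(6) Suc] assms(3) by simp
  then obtain w where w: "w \<in> ipow R A n" "(h * x) * (h ^ k * x ^ n) = x * w"
    using iprod_smul_elim[OF ipow_rmodule[OF assms(1,2)]] by metis
  have "xi * ((h * x) * (h ^ k * x ^ n)) = (x * xi) * (h ^ Suc k * x ^ n)"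
    by (simp add: mult_ac)
  then have "h ^ Suc k * x ^ n = xi * ((h * x) * (h ^ k * x ^ n))"
    using assms(4) by simp
  also have "\<dots> = w"
    using w(2) assms(4) by (metis mult.assoc mult.commute mult_1)
  finally show ?case using w(1) by simp
qed

lemma noetherian_ascending_chain:
  assumes "noetherian R" "\<And>N. r_ideal R (U N)" "\<And>N. U N \<subseteq> U (Suc N)"
  shows "\<exists>N. U (Suc N) \<subseteq> U N"
proof -
  have mono: "U k \<subseteq> U N" if "k \<le> N" for k N
    using lift_Suc_mono_le[of U, OF assms(3) that] .
  have "r_ideal R (\<Union>N. U N)"
    unfolding r_ideal_def rmodule_def
  proof (intro conjI ballI)
    show "(\<Union>N. U N) \<subseteq> R" using assms(2) unfolding r_ideal_def by blast
    have "0 \<in> U 0" using assms(2)[of 0] by (simp add: r_ideal_def rmodule_def)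
    then show "0 \<in> (\<Union>N. U N)" by blast
  next
    fix a b assume "a \<in> (\<Union>N. U N)" "b \<in> (\<Union>N. U N)"
    then obtain i j where "a \<in> U i" "b \<in> U j" by blast
    then have "a \<in> U (max i j)" "b \<in> U (max i j)"
      using mono[of i "max i j"] mono[of j "max i j"] by auto
    then show "a + b \<in> (\<Union>N. U N)"
      using assms(2)[of "max i j"] unfolding r_ideal_def rmodule_def by blast
  next
    fix r a assume "r \<in> R" "a \<in> (\<Union>N. U N)"
    then obtain i where "a \<in> U i" by blast
    then show "r * a \<in> (\<Union>N. U N)"
      using \<open>r \<in> R\<close> assms(2)[of i] unfolding r_ideal_def rmodule_def by blast
  qed
  then have "fin_gen R (\<Union>N. U N)" using assms(1) by (simp add: noetherian_def)
  then obtain G where G: "finite G" "G \<subseteq> (\<Union>N. U N)" "(\<Union>N. U N) = gen R G"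
    unfolding fin_gen_def by blast
  have "\<exists>k. \<forall>g\<in>G. g \<in> U (k g)" using G(2) by (intro bchoice) blast
  then obtain k where "\<forall>g\<in>G. g \<in> U (k g)" by blast
  moreover have "k g \<le> Max (k ` G)" if "g \<in> G" for g
    using G(1) that by simp
  ultimately have "G \<subseteq> U (Max (k ` G))"
    using mono by (meson subsetD subsetI)
  moreover have "rmodule R (U (Max (k ` G)))"
    using assms(2) by (simp add: r_ideal_def)
  ultimately have "gen R G \<subseteq> U (Max (k ` G))"
    using G(1) gen_subset by blast
  then show ?thesis using G(3) by blast
qed

lemma noetherian_mem_of_bounded_powers:
  assumes "noetherian R" "subring R" "e * ei = 1" "h * b = 1" "b \<in> R" "\<And>k. e * h ^ k \<in> R"
  shows "h \<in> R"
proof -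
  define U where "U N = smul (e * h ^ N) R" for N
  have "U N \<subseteq> U (Suc N)" for N
  proof
    fix v assume "v \<in> U N"
    then obtain s where s: "s \<in> R" "v = e * h ^ N * s" by (auto simp: U_def smul_def)
    then have "v = e * h ^ N * (h * b) * s" using assms(4) by simp
    then have "v = e * h ^ Suc N * (b * s)" by (simp add: mult_ac)
    moreover have "b * s \<in> R" using assms(2,5) s(1) by (simp add: subring_def)
    ultimately show "v \<in> U (Suc N)" unfolding U_def smul_def by blast
  qed
  moreover have "r_ideal R (U N)" for N
    unfolding U_def using assms(2,6) by (rule subring_smul_r_ideal)
  ultimately obtain N where "U (Suc N) \<subseteq> U N"
    using noetherian_ascending_chain[OF assms(1)] by blast
  moreover have "e * h ^ Suc N \<in> U (Suc N)"
    using assms(2) unfolding U_def smul_def subring_def by (intro rev_image_eqI[of 1]) simp_all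
  ultimately obtain t where t: "t \<in> R" "e * h ^ Suc N = e * h ^ N * t"
    unfolding U_def smul_def by blast
  have "(ei * b ^ N) * (e * h ^ N) = (e * ei) * (h * b) ^ N"
    by (simp add: power_mult_distrib mult_ac)
  then have inv: "(ei * b ^ N) * (e * h ^ N) = 1"
    using assms(3,4) by simp
  have "h = (ei * b ^ N) * (e * h ^ N) * h" using inv by simp
  also have "\<dots> = (ei * b ^ N) * (e * h ^ Suc N)" by (simp add: mult_ac)
  also have "\<dots> = (ei * b ^ N) * (e * h ^ N) * t" using t(2) by (simp add: mult.assoc)
  also have "\<dots> = t" using inv by simp
  finally show ?thesis using t(1) by simp
qed

lemma colon_contains_unit:
  fixes R :: "'q::comm_ring_1 set"
  assumes "total_ring_of_fractions R" "frac_ideal R W" "fin_gen R I"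
  shows "\<exists>u v. u \<in> colon W I \<and> u * v = 1"
proof -
  obtain w where w: "w \<in> W" "regular_in UNIV w" using assms(2) by (auto simp: frac_ideal_def)
  obtain wi where wi: "w * wi = 1" using regular_in_UNIV_invertible[OF assms(1) w(2)] by blast
  obtain s where s: "regular_in R s" "\<forall>i\<in>I. s * i \<in> R"
    using fin_gen_common_denominator[OF assms(1,3)] by blast
  obtain si where si: "s * si = 1"
    using assms(1) s(1) unfolding total_ring_of_fractions_def by blast
  have "(s * i) * w \<in> W" if "i \<in> I" for i
    using s(2) w(1) assms(2) that unfolding frac_ideal_def rmodule_def by blast
  then have "w * s \<in> colon W I" by (simp add: colon_def mult_ac)
  moreover have "(w * s) * (wi * si) = (w * wi) * (s * si)" by (simp add: mult_ac)
  ultimately show ?thesis using wi si by auto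
qed

lemma reduction_of_colonE:
  assumes "total_ring_of_fractions R" "reduction_of_colon R W I z"
  obtains y yi n where "y * yi = 1"
    and "r_ideal R (smul y (colon W I))" "z * y \<in> smul y (colon W I)"
    and "ipow R (smul y (colon W I)) (Suc n)
           = iprod (smul (z * y) R) (ipow R (smul y (colon W I)) n)"
proof -
  obtain y where y: "regular_in R y"
    and red: "is_minimal_reduction R (smul (z * y) R) (smul y (colon W I))"
    using assms(2) unfolding reduction_of_colon_def by blast
  obtain yi where yi: "y * yi = 1"
    using assms(1) y unfolding total_ring_of_fractions_def by blast
  from red obtain n where A: "r_ideal R (smul y (colon W I))"
    and xA: "smul (z * y) R \<subseteq> smul y (colon W I)"
    and "ipow R (smul y (colon W I)) (Suc n)
           = iprod (smul (z * y) R) (ipow R (smul y (colon W I)) n)"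
    unfolding is_minimal_reduction_def is_reduction_def by blast
  moreover have "z * y \<in> smul (z * y) R"
    using assms(1) unfolding smul_def total_ring_of_fractions_def subring_def
    by (intro rev_image_eqI[of 1]) simp_all
  ultimately show thesis using that[OF yi] by blast
qed

lemma reduction_of_colon_unit:
  fixes R :: "'q::comm_ring_1 set"
  assumes "total_ring_of_fractions R" "frac_ideal R W" "fin_gen R I" "reduction_of_colon R W I z"
  shows "z \<in> colon W I" and "\<exists>zi. z * zi = 1"
proof -
  have sR: "subring R" using assms(1) by (simp add: total_ring_of_fractions_def)
  obtain y yi n where yi: "y * yi = 1" and A: "r_ideal R (smul y (colon W I))"
    and xA: "z * y \<in> smul y (colon W I)"
    and red: "ipow R (smul y (colon W I)) (Suc n)
               = iprod (smul (z * y) R) (ipow R (smul y (colon W I)) n)"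
    by (rule reduction_of_colonE[OF assms(1,4)])
  obtain j where j: "j \<in> colon W I" "z * y = y * j" using xA by (auto simp: smul_def)
  have "z = z * y * yi" using yi by (simp add: mult.assoc)
  also have "\<dots> = j * (y * yi)" using j(2) by (simp add: mult_ac)
  finally show "z \<in> colon W I" using j(1) yi by simp
  obtain u v where u: "u \<in> colon W I" "u * v = 1" using colon_contains_unit[OF assms(1-3)] by blast
  have "(y * u) * (yi * v) = (y * yi) * (u * v)" by (simp add: mult_ac)
  then have "(y * u) * (yi * v) = 1" using yi u(2) by simp
  moreover have "y * u \<in> smul y (colon W I)" using u(1) by (simp add: smul_def)
  ultimately obtain xi where "z * y * xi = 1"
    using reduction_generator_unit[OF sR A red] by blast
  then show "\<exists>zi. z * zi = 1" by (metis mult.assoc)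
qed

lemma reduction_of_colon_inverse_mem:
  fixes R :: "'q::comm_ring_1 set"
  assumes "total_ring_of_fractions R" "noetherian R" "frac_ideal R W" "fin_gen R I"
    and "reduction_of_colon R W I z"
    and "h \<in> colon W (smul z I)" "h * b = 1" "b \<in> R"
  shows "h \<in> R"
proof -
  have sR: "subring R" using assms(1) by (simp add: total_ring_of_fractions_def)
  obtain y yi n where yi: "y * yi = 1" and A: "r_ideal R (smul y (colon W I))"
    and xA: "z * y \<in> smul y (colon W I)"
    and red: "ipow R (smul y (colon W I)) (Suc n)
               = iprod (smul (z * y) R) (ipow R (smul y (colon W I)) n)"
    by (rule reduction_of_colonE[OF assms(1,5)])
  obtain zi where zi: "z * zi = 1" using reduction_of_colon_unit(2)[OF assms(1,3-5)] by blast
  have "(z * y) * (zi * yi) = (z * zi) * (y * yi)" by (simp add: mult_ac)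
  then have x_unit: "(z * y) * (zi * yi) = 1" using zi yi by simp
  have "h * z \<in> colon W I"
    using assms(6) by (auto simp: colon_def smul_def mult.assoc)
  then have "h * (z * y) \<in> smul y (colon W I)"
    unfolding smul_def by (rule rev_image_eqI) (simp add: mult_ac)
  then have "h ^ k * (z * y) ^ n \<in> ipow R (smul y (colon W I)) n" for k
    by (rule reduction_power_mult_mem[OF sR A red x_unit xA])
  moreover have "ipow R (smul y (colon W I)) n \<subseteq> R"
    using A by (intro ipow_subset[OF sR]) (simp add: r_ideal_def)
  ultimately have "(z * y) ^ n * h ^ k \<in> R" for k
    by (metis mult.commute subsetD)
  moreover have "(z * y) ^ n * (zi * yi) ^ n = 1"
    using x_unit by (metis power_mult_distrib power_one)
  ultimately show ?thesis
    by (rule noetherian_mem_of_bounded_powers[OF assms(2) sR _ assms(7,8), rotated])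
qed

lemma colon_eq_iff_mult_colon_subset:
  assumes "L \<subseteq> W"
  shows "colon W m = colon L m \<longleftrightarrow> (\<forall>a\<in>m. \<forall>f\<in>colon W m. a * f \<in> L)"
proof
  assume "colon W m = colon L m"
  then show "\<forall>a\<in>m. \<forall>f\<in>colon W m. a * f \<in> L" by (auto simp: colon_def mult.commute)
next
  assume H: "\<forall>a\<in>m. \<forall>f\<in>colon W m. a * f \<in> L"
  show "colon W m = colon L m"
  proof
    show "colon W m \<subseteq> colon L m"
    proof
      fix f assume "f \<in> colon W m"
      then show "f \<in> colon L m" using H by (intro colonI) (simp add: mult.commute)
    qed
    show "colon L m \<subseteq> colon W m" using assms by (rule colon_mono)
  qed
qed

lemma mult_colon_subset_iff:
  fixes W L m :: "'q::comm_ring_1 set"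
  assumes "colon W (colon W m) = m" "colon W (colon W L) = L"
  shows "(\<forall>a\<in>m. \<forall>f\<in>colon W m. a * f \<in> L) \<longleftrightarrow> colon W L \<subseteq> colon m m"
proof
  assume H: "\<forall>a\<in>m. \<forall>f\<in>colon W m. a * f \<in> L"
  show "colon W L \<subseteq> colon m m"
  proof
    fix h assume h: "h \<in> colon W L"
    have "h * a \<in> m" if a: "a \<in> m" for a
    proof -
      have "h * a \<in> colon W (colon W m)"
      proof (rule colonI)
        fix f assume "f \<in> colon W m"
        then have "a * f \<in> L" using H a by blast
        then show "h * a * f \<in> W" using colonD[OF h] by (simp add: mult.assoc)
      qed
      then show ?thesis using assms(1) by simp
    qed
    then show "h \<in> colon m m" by (rule colonI)
  qed
next
  assume P: "colon W L \<subseteq> colon m m"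
  show "\<forall>a\<in>m. \<forall>f\<in>colon W m. a * f \<in> L"
  proof (intro ballI)
    fix a f assume a: "a \<in> m" and f: "f \<in> colon W m"
    have "a * f \<in> colon W (colon W L)"
    proof (rule colonI)
      fix h assume "h \<in> colon W L"
      then have "h * a \<in> m" using P a by (blast dest: colonD)
      then have "f * (h * a) \<in> W" by (rule colonD[OF f])
      then show "a * f * h \<in> W" by (simp add: mult_ac)
    qed
    then show "a * f \<in> L" using assms(2) by simp
  qed
qed

lemma almost_canonical_iff:
  assumes "colon W (colon W m) = m" "colon W (colon W (smul z I)) = smul z I"
  shows "almost_canonical R m W I z \<longleftrightarrow> colon W (smul z I) \<subseteq> colon m m"
proof
  assume ac: "almost_canonical R m W I z"
  have "a * f \<in> colon W (colon m m)" if a: "a \<in> m" and f: "f \<in> colon W m" for a f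
  proof (rule colonI)
    fix b assume "b \<in> colon m m"
    then have "f * (b * a) \<in> W" using a f by (blast dest: colonD)
    then show "a * f * b \<in> W" by (simp add: mult_ac)
  qed
  then have "\<forall>a\<in>m. \<forall>f\<in>colon W m. a * f \<in> smul z I"
    using ac by (auto simp: almost_canonical_def)
  then show "colon W (smul z I) \<subseteq> colon m m"
    using mult_colon_subset_iff[OF assms] by blast
next
  assume "colon W (smul z I) \<subseteq> colon m m"
  then have "colon W (colon m m) \<subseteq> colon W (colon W (smul z I))" by (rule colon_antimono)
  then show "almost_canonical R m W I z" using assms(2) by (simp add: almost_canonical_def)
qed

lemma colon_subset_colon_max_ideal:
  fixes R :: "'q::comm_ring_1 set"
  assumes "local_ring R m" "colon W W = R" "\<forall>a\<in>m. \<forall>w\<in>W. a * w \<in> L"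
    and "\<And>h b. h \<in> colon W L \<Longrightarrow> b \<in> R \<Longrightarrow> h * b = 1 \<Longrightarrow> h \<in> R"
  shows "colon W L \<subseteq> colon m m"
proof
  fix h assume h: "h \<in> colon W L"
  have m: "m = {r \<in> R. \<not> (\<exists>u\<in>R. r * u = 1)}" "\<forall>r\<in>R. \<forall>a\<in>m. r * a \<in> m"
    using assms(1) unfolding local_ring_def r_ideal_def rmodule_def by blast+
  have "h * a \<in> m" if a: "a \<in> m" for a
  proof (rule ccontr)
    have "h * a \<in> colon W W" using h a assms(3) by (auto simp: colon_def mult.assoc)
    then have "h * a \<in> R" using assms(2) by simp
    moreover assume "h * a \<notin> m"
    ultimately obtain u where u: "u \<in> R" "h * a * u = 1" using m(1) by blast
    have "a * u \<in> m" using m(2) a u(1) by (metis mult.commute)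
    moreover have "h * (a * u) = 1" using u(2) by (simp add: mult.assoc)
    ultimately have "h \<in> R" using assms(4)[OF h] m(1) by blast
    then show False using \<open>a * u \<in> m\<close> \<open>h * (a * u) = 1\<close> m(1) by (auto simp: mult.commute)
  qed
  then show "h \<in> colon m m" by (simp add: colon_def)
qed

lemma iprod_max_ideal_subset_iff:
  fixes R :: "'q::comm_ring_1 set"
  assumes "local_ring R m" "colon W W = R" "rmodule R W" "rmodule R L"
    and "colon W (colon W m) = m" "colon W (colon W L) = L"
    and "\<And>h b. h \<in> colon W L \<Longrightarrow> b \<in> R \<Longrightarrow> h * b = 1 \<Longrightarrow> h \<in> R"
  shows "iprod m W \<subseteq> L \<longleftrightarrow> colon W L \<subseteq> colon m m"
proof
  assume "iprod m W \<subseteq> L"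
  then have "\<forall>a\<in>m. \<forall>w\<in>W. a * w \<in> L" using iprod_subset_iff[OF assms(4)] by blast
  then show "colon W L \<subseteq> colon m m"
    by (rule colon_subset_colon_max_ideal[OF assms(1,2) _ assms(7)])
next
  assume "colon W L \<subseteq> colon m m"
  then have H: "\<forall>a\<in>m. \<forall>f\<in>colon W m. a * f \<in> L"
    using mult_colon_subset_iff[OF assms(5,6)] by blast
  have "m \<subseteq> R" using assms(1) unfolding local_ring_def r_ideal_def by blast
  have "w \<in> colon W m" if w: "w \<in> W" for w
  proof (rule colonI)
    fix a assume "a \<in> m"
    then have "a * w \<in> W" using \<open>m \<subseteq> R\<close> w assms(3) unfolding rmodule_def by blast
    then show "w * a \<in> W" by (simp add: mult.commute)
  qed
  then show "iprod m W \<subseteq> L" using H iprod_subset_iff[OF assms(4)] by blast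
qed

theorem proposition1p6:
  fixes R m W I :: "'q::comm_ring_1 set" and z :: 'q
  assumes "total_ring_of_fractions R"
    and "noetherian R"
    and "local_ring R m"
    and "cm_dim_one R m"
    and "infinite_residue_field R m"
    and "canonical_ideal R W"
    and "R \<subseteq> W" and "W \<subseteq> integral_closure R"
    and "frac_ideal R I"
    and "reduction_of_colon R W I z"
  shows "(almost_canonical R m W I z \<longleftrightarrow> colon W m = colon (smul z I) m)
       \<and> (colon W m = colon (smul z I) m \<longleftrightarrow> iprod m W \<subseteq> smul z I)"
proof -
  have sR: "subring R" using assms(1) by (simp add: total_ring_of_fractions_def)
  have W: "frac_ideal R W" and dual: "\<And>X. frac_ideal R X \<Longrightarrow> colon W (colon W X) = X"
    using assms(6) by (simp_all add: canonical_ideal_def)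
  have I: "fin_gen R I" using assms(9) by (simp add: frac_ideal_def)
  note z = reduction_of_colon_unit[OF assms(1) W I assms(10)]
  have L: "frac_ideal R (smul z I)" using z(2) frac_ideal_smul_unit[OF assms(9)] by blast
  have LW: "smul z I \<subseteq> W" using z(1) by (auto simp: colon_def smul_def)
  have m: "frac_ideal R m" by (rule max_ideal_frac_ideal[OF assms(1-4)])
  have "almost_canonical R m W I z \<longleftrightarrow> colon W (smul z I) \<subseteq> colon m m"
    by (rule almost_canonical_iff[OF dual[OF m] dual[OF L]])
  moreover have "colon W m = colon (smul z I) m \<longleftrightarrow> colon W (smul z I) \<subseteq> colon m m"
    using colon_eq_iff_mult_colon_subset[OF LW] mult_colon_subset_iff[OF dual[OF m] dual[OF L]]
    by simp
  moreover have "iprod m W \<subseteq> smul z I \<longleftrightarrow> colon W (smul z I) \<subseteq> colon m m"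
    using W L by (intro iprod_max_ideal_subset_iff[OF assms(3) canonical_colon_self[OF assms(6) sR]
        _ _ dual[OF m] dual[OF L] reduction_of_colon_inverse_mem[OF assms(1,2) W I assms(10)]])
      (simp_all add: frac_ideal_def)
  ultimately show ?thesis by blast
qed

end
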